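(* Let $N>2$, $1<p<N$, and assume (H1)–(H4). For $a>0$ let $v_a$ be the solution on $[0,T]$ of $$(|v'(t)|^{p-2}v'(t))'+h(t)f(v(t))=0,\qquad v(0)=0,\ v'(0)=a.$$ Then $\max_{[0,T]}v_a\to\infty$ as $a\to\infty$.
   Context: Standing hypotheses. $f:\mathbb{R}\setminus\{0\}\to\mathbb{R}$ is odd and locally Lipschitz, and: (H1) there is a locally Lipschitz $g_1:\mathbb{R}\to\mathbb{R}$ and $l>p-1$ with $f(u)=|u|^{l-1}u+g_1(u)$ for all large $|u|$, and $\lim_{u\to\infty}|g_1(u)|/|u|^l=0$; (H2) there is a locally Lipschitz $g_2:\mathbb{R}\to\mathbb{R}$ with $g_2(0)=0$ and $0<m<1$ such that $f(u)=-\frac{1}{|u|^{m-1}u}+g_2(u)$ for all small $|u|\neq 0$; (H3) $f$ has a unique positive zero $\beta$, with $f<0$ on $(0,\beta)$ and $f>0$ on $(\beta,\infty)$; (H4) $K>0$ and $K'$ are continuous on $[R,\infty)$ (for a fixed $R>0$), $\frac{rK'(r)}{K(r)}>-\frac{(N-1)p}{p-1}$ on $[R,\infty)$, and there are constants $K_0,K_1>0$ with $\frac{K_0}{r^{\alpha}}\le K(r)\le \frac{K_1}{r^{\alpha_1}}$ on $[R,\infty)$, where $N+\frac{m(N-p)}{p-1}<\alpha_1\le\alpha<2(N-1)$. Notation: $T=R^{\frac{p-N}{p-1}}$ and, for $0<t\le T$, $h(t)=\left(\frac{N-p}{p-1}\right)^{-p}t^{\frac{p(N-1)}{p-N}}K\!\left(t^{\frac{p-1}{p-N}}\right)>0$.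 A solution of the initial value problem on an interval $[0,d]$ means $v\in C^1[0,d]$ such that $t\mapsto h(t)f(v(t))$ is integrable on $(0,t)$ for each $t\le d$ and $|v'(t)|^{p-2}v'(t)=a^{p-1}-\int_0^t h(s)f(v(s))\,ds$, $v(0)=0$; it exists uniquely on $[0,T]$ for each $a>0$. *)

theory Defs
  imports "HOL-Analysis.Analysis"
begin

definition loc_lipschitz_on :: "real set \<Rightarrow> (real \<Rightarrow> real) \<Rightarrow> bool" where
  "loc_lipschitz_on S g \<longleftrightarrow>
     (\<forall>x\<in>S. \<exists>e>0. \<exists>L. L-lipschitz_on (cball x e \<inter> S) g)"

definition hfun :: "nat \<Rightarrow> real \<Rightarrow> (real \<Rightarrow> real) \<Rightarrow> real \<Rightarrow> real" where
  "hfun N p K t =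
     ((real N - p) / (p - 1)) powr (- p) * t powr (p * (real N - 1) / (p - real N))
       * K (t powr ((p - 1) / (p - real N)))"

text \<open>v is a solution of the initial value problem (with initial slope a) on [0,d]:
  v is C^1 on [0,d], v(0)=0, h (f o v) is integrable on (0,t) for each t \<le> d, and
  |v'(t)|^(p-2) v'(t) = a^(p-1) - int_0^t h(s) f(v(s)) ds.\<close>
definition ivp_solution ::
  "(real \<Rightarrow> real) \<Rightarrow> (real \<Rightarrow> real) \<Rightarrow> real \<Rightarrow> real \<Rightarrow> (real \<Rightarrow> real) \<Rightarrow> real \<Rightarrow> bool" where
  "ivp_solution h f p a v d \<longleftrightarrow>
     v 0 = 0 \<and>
     (\<exists>v'. (\<forall>t\<in>{0..d}. (v has_real_derivative v' t) (at t within {0..d})) \<and>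
           continuous_on {0..d} v' \<and>
           (\<forall>t\<in>{0..d}. (\<lambda>s. h s * f (v s)) absolutely_integrable_on {0<..<t} \<and>
              \<bar>v' t\<bar> powr (p - 2) * v' t
                = a powr (p - 1) - integral {0<..<t} (\<lambda>s. h s * f (v s))))"

end

theory Submission
  imports Defs
begin

(* As long as 0 < v < M, the forcing term f(v) is bounded above by a constant C, because f is
   negative on (0, beta) and continuous on [beta, M]. The weight h is integrable on (0, T): near 0
   it is dominated by s^gamma with gamma > -1, which is exactly the condition alpha1 > N on the decay
   of K. The integral equation then gives |v'|^(p-2) v' >= a^(p-1) - C * int h >= (M/T)^(p-1) for
   large a, so v' >= M/T on [0, T] and v(T) >= M, unless v has already reached M. *)

lemma isCont_if_loc_lipschitz_on_open:
  assumes "loc_lipschitz_on S g" "open S" "x \<in> S"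
  shows "isCont g x"
proof -
  obtain e L where e: "e > 0" and L: "L-lipschitz_on (cball x e \<inter> S) g"
    using assms(1,3) unfolding loc_lipschitz_on_def by blast
  have "ball x e \<inter> S \<subseteq> interior (cball x e \<inter> S)"
    using assms(2) by (intro interior_maximal) auto
  then have "x \<in> interior (cball x e \<inter> S)" using e assms(3) by auto
  then show ?thesis
    using continuous_on_interior lipschitz_on_continuous_on[OF L] by blast
qed

lemma bounded_above_if_negative_below:
  fixes f :: "real \<Rightarrow> real"
  assumes "continuous_on {\<beta>..M} f" and "\<forall>u. 0 < u \<and> u < \<beta> \<longrightarrow> f u < 0"
  shows "\<exists>C\<ge>0. \<forall>u. 0 < u \<and> u < M \<longrightarrow> f u \<le> C"
proof -
  obtain C where C: "\<forall>u\<in>{\<beta>..M}. \<bar>f u\<bar> \<le> C"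
    using compact_imp_bounded[OF compact_continuous_image[OF assms(1) compact_Icc]]
    unfolding bounded_real by auto
  have "f u \<le> max 0 C" if "0 < u" "u < M" for u
  proof (cases "u < \<beta>")
    case False
    then have "\<bar>f u\<bar> \<le> C" using C that by simp
    then show ?thesis by linarith
  qed (use assms(2) that in fastforce)
  then show ?thesis by (intro exI[of _ "max 0 C"]) auto
qed

lemma integral_bounded_if_powr_majorant:
  fixes g :: "real \<Rightarrow> real"
  assumes cont: "continuous_on {0<..T} g"
    and maj: "\<forall>s\<in>{0<..T}. 0 \<le> g s \<and> g s \<le> c * s powr \<gamma>"
    and c: "c \<ge> 0" and \<gamma>: "\<gamma> > -1" and t: "t \<in> {0..T}"
  shows "g integrable_on {0<..<t} \<and> integral {0<..<t} g \<le> integral {0..T} (\<lambda>s. c * s powr \<gamma>)"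
proof -
  define G where "G = (\<lambda>s::real. c * s powr \<gamma>)"
  have G_int: "G integrable_on {0..x}" if "x \<ge> 0" for x
    unfolding G_def using integrable_on_cmult_left[OF integrable_on_powr_from_0[OF \<gamma> that]] by simp
  have "G integrable_on {0<..<t}"
    using G_int t by (simp add: integrable_on_Icc_iff_Ioo)
  moreover have "g \<in> borel_measurable (lebesgue_on {0<..<t})"
    using t by (intro continuous_imp_measurable_on_sets_lebesgue continuous_on_subset[OF cont]) auto
  ultimately have "g absolutely_integrable_on {0<..<t}"
    using maj t by (intro measurable_bounded_by_integrable_imp_absolutely_integrable[of _ _ G])
      (auto simp: G_def)
  then have g_int: "g integrable_on {0<..<t}" using absolutely_integrable_on_def by blast
  have "integral {0<..<t} g \<le> integral {0<..<t} G"
    using g_int \<open>G integrable_on {0<..<t}\<close> maj t by (intro integral_le) (auto simp: G_def)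
  also have "\<dots> \<le> integral {0..T} G"
    using G_int t c by (intro integral_subset_le \<open>G integrable_on {0<..<t}\<close>) (auto simp: G_def)
  finally show ?thesis using g_int unfolding G_def by blast
qed

lemma hfun_argument_ge:
  assumes p: "1 < p" "p < real N" and R: "R > 0"
    and s: "0 < s" "s \<le> R powr ((p - real N) / (p - 1))"
  shows "s powr ((p - 1) / (p - real N)) \<ge> R"
proof -
  have "(R powr ((p - real N) / (p - 1))) powr ((p - 1) / (p - real N)) = R"
    using p R by (simp add: powr_powr)
  moreover have "(p - 1) / (p - real N) < 0" using p by (simp add: divide_pos_neg)
  ultimately show ?thesis using powr_mono2'[OF _ s, of "(p - 1) / (p - real N)"] by simp
qed

lemma hfun_powr_bound:
  assumes p: "1 < p" "p < real N" and R: "R > 0"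
    and K_pos: "\<forall>r\<ge>R. K r > 0" and K_le: "\<forall>r\<ge>R. K r \<le> K1 / r powr \<alpha>1"
    and s: "0 < s" "s \<le> R powr ((p - real N) / (p - 1))"
  shows "0 < hfun N p K s \<and> hfun N p K s \<le> ((real N - p) / (p - 1)) powr (- p) * K1
           * s powr ((p * (real N - 1) - (p - 1) * \<alpha>1) / (p - real N))"
proof -
  define e where "e = (p - 1) / (p - real N)"
  define c where "c = ((real N - p) / (p - 1)) powr (- p)"
  define a where "a = p * (real N - 1) / (p - real N)"
  have h_eq: "hfun N p K s = c * s powr a * K (s powr e)"
    unfolding hfun_def c_def a_def e_def by simp
  have r: "s powr e \<ge> R" unfolding e_def using hfun_argument_ge[OF p R s] .
  have "c > 0" unfolding c_def using p by simp
  have "K (s powr e) \<le> K1 / (s powr e) powr \<alpha>1" using K_le r by blast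
  then have "K (s powr e) \<le> K1 / s powr (e * \<alpha>1)" by (simp add: powr_powr)
  then have "hfun N p K s \<le> c * s powr a * (K1 / s powr (e * \<alpha>1))"
    unfolding h_eq using \<open>c > 0\<close> by (intro mult_left_mono) auto
  also have "\<dots> = c * K1 * s powr (a - e * \<alpha>1)" by (simp add: powr_diff)
  also have "a - e * \<alpha>1 = (p * (real N - 1) - (p - 1) * \<alpha>1) / (p - real N)"
    unfolding a_def e_def using p by (simp add: divide_simps)
  finally show ?thesis
    unfolding c_def using h_eq \<open>c > 0\<close> K_pos r s by simp
qed

lemma continuous_on_hfun:
  assumes p: "1 < p" "p < real N" and R: "R > 0"
    and K_deriv: "\<forall>r\<ge>R. (K has_real_derivative K' r) (at r within {R..})"
  shows "continuous_on {0<..R powr ((p - real N) / (p - 1))} (hfun N p K)"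
proof -
  have "continuous_on {R..} K"
    using K_deriv by (metis DERIV_continuous atLeast_iff continuous_on_eq_continuous_within)
  then have "continuous_on {0<..R powr ((p - real N) / (p - 1))} (\<lambda>s. K (s powr ((p - 1) / (p - real N))))"
    by (rule continuous_on_compose2) (auto intro!: continuous_intros hfun_argument_ge[OF p R])
  then show ?thesis unfolding hfun_def by (intro continuous_intros) auto
qed

text \<open>The majorant of the weight has exponent \<open>(p - 1) (N - \<alpha>1) / (p - N) - 1 > -1\<close>
  because \<open>\<alpha>1 > N\<close>: this is where the decay of \<open>K\<close> at infinity is used.\<close>
lemma hfun_integral_bounded:
  assumes p: "1 < p" "p < real N" and R: "R > 0" and K1: "K1 > 0"
    and K_pos: "\<forall>r\<ge>R. K r > 0"
    and K_deriv: "\<forall>r\<ge>R. (K has_real_derivative K' r) (at r within {R..})"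
    and K_le: "\<forall>r\<ge>R. K r \<le> K1 / r powr \<alpha>1" and \<alpha>1: "\<alpha>1 > real N"
  shows "\<exists>H. \<forall>t\<in>{0..R powr ((p - real N) / (p - 1))}. hfun N p K integrable_on {0<..<t}
           \<and> integral {0<..<t} (hfun N p K) \<le> H \<and> (\<forall>s\<in>{0<..<t}. 0 \<le> hfun N p K s)"
proof -
  define T where "T = R powr ((p - real N) / (p - 1))"
  define \<gamma> where "\<gamma> = (p * (real N - 1) - (p - 1) * \<alpha>1) / (p - real N)"
  define c where "c = ((real N - p) / (p - 1)) powr (- p) * K1"
  have "\<gamma> + 1 = (p - 1) * (real N - \<alpha>1) / (p - real N)"
    unfolding \<gamma>_def using p by (simp add: field_simps)
  also have "\<dots> > 0" using p \<alpha>1 by (intro divide_neg_neg) (auto simp: mult_pos_neg)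
  finally have \<gamma>: "\<gamma> > -1" by linarith
  have maj: "\<forall>s\<in>{0<..T}. 0 \<le> hfun N p K s \<and> hfun N p K s \<le> c * s powr \<gamma>"
    using hfun_powr_bound[OF p R K_pos K_le] unfolding T_def c_def \<gamma>_def
    by (fastforce simp: less_imp_le)
  have "c \<ge> 0" unfolding c_def using K1 by simp
  have "hfun N p K integrable_on {0<..<t} \<and> integral {0<..<t} (hfun N p K)
          \<le> integral {0..T} (\<lambda>s. c * s powr \<gamma>) \<and> (\<forall>s\<in>{0<..<t}. 0 \<le> hfun N p K s)"
    if "t \<in> {0..T}" for t
    using integral_bounded_if_powr_majorant[OF _ maj \<open>c \<ge> 0\<close> \<gamma> that] maj that
      continuous_on_hfun[OF p R K_deriv] unfolding T_def by auto
  then show ?thesis unfolding T_def by blast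
qed

lemma mvt_from_0:
  fixes v v' :: "real \<Rightarrow> real"
  assumes "0 < s" "s \<le> T"
    and deriv: "\<forall>t\<in>{0..T}. (v has_real_derivative v' t) (at t within {0..T})"
  shows "\<exists>x\<in>{0<..<s}. v s - v 0 = v' x * s"
proof -
  have "(v has_derivative (\<lambda>h. v' x * h)) (at x within {0..s})" if "0 \<le> x" "x \<le> s" for x
    using DERIV_subset[of v "v' x" x "{0..T}" "{0..s}"] deriv that assms(2)
    by (auto simp: has_field_derivative_def)
  from mvt_simple[OF \<open>0 < s\<close> this] show ?thesis by (auto simp: mult.commute)
qed

lemma pos_if_deriv_pos_from_0:
  fixes v v' :: "real \<Rightarrow> real"
  assumes "v 0 = 0" and deriv: "\<forall>t\<in>{0..T}. (v has_real_derivative v' t) (at t within {0..T})"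
    and "0 < s" "s \<le> T" and "\<forall>x\<in>{0<..<s}. v' x > 0"
  shows "v s > 0"
  using mvt_from_0[OF assms(3,4) deriv] assms(1,3,5) by force

lemma ivp_solution_continuous_on:
  assumes "ivp_solution h f p a v T"
  shows "continuous_on {0..T} v"
  using assms unfolding ivp_solution_def
  by (metis DERIV_continuous continuous_on_eq_continuous_within)

lemma signed_powr_ge_imp_ge:
  fixes x B p :: real
  assumes p: "p > 1" and B: "B > 0" and ge: "\<bar>x\<bar> powr (p - 2) * x \<ge> B powr (p - 1)"
  shows "x \<ge> B"
proof -
  have "\<bar>x\<bar> powr (p - 2) * x > 0" using ge B powr_gt_zero[of B "p - 1"] by linarith
  then have "x > 0" by (simp add: zero_less_mult_iff)
  then have "\<bar>x\<bar> powr (p - 2) * x = x powr (p - 1)"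
    using powr_add[of x "p - 2" 1] by simp
  then show ?thesis
    using ge p B \<open>x > 0\<close> by (metis linorder_not_le powr_less_mono2 diff_gt_0_iff_gt less_eq_real_def)
qed

lemma slope_ge_if_forcing_bounded:
  fixes h f v :: "real \<Rightarrow> real"
  assumes p: "p > 1" and B: "B > 0" and C: "C \<ge> 0"
    and eq: "\<bar>w\<bar> powr (p - 2) * w = a powr (p - 1) - integral {0<..<t} (\<lambda>s. h s * f (v s))"
    and hf_int: "(\<lambda>s. h s * f (v s)) integrable_on {0<..<t}"
    and h_int: "h integrable_on {0<..<t}" and H: "integral {0<..<t} h \<le> H"
    and h_nonneg: "\<forall>s\<in>{0<..<t}. 0 \<le> h s"
    and fv: "\<forall>s\<in>{0<..<t}. f (v s) \<le> C"
    and a: "C * H + B powr (p - 1) \<le> a powr (p - 1)"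
  shows "w \<ge> B"
proof -
  have "h s * f (v s) \<le> C * h s" if "s \<in> {0<..<t}" for s
    using mult_left_mono[OF fv[rule_format, OF that] h_nonneg[rule_format, OF that]]
    by (simp add: mult.commute)
  then have "integral {0<..<t} (\<lambda>s. h s * f (v s)) \<le> integral {0<..<t} (\<lambda>s. C * h s)"
    using hf_int integrable_on_cmult_left[OF h_int] by (intro integral_le) auto
  also have "\<dots> \<le> C * H" using H C by (simp add: mult_left_mono)
  finally show ?thesis
    using signed_powr_ge_imp_ge[OF p B] eq a by simp
qed

text \<open>A continuity argument at the first point where \<open>v'\<close> could vanish.\<close>
lemma deriv_ge_if_ge_while_positive:
  fixes v v' :: "real \<Rightarrow> real"
  assumes v0: "v 0 = 0"
    and deriv: "\<forall>t\<in>{0..T}. (v has_real_derivative v' t) (at t within {0..T})"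
    and cont: "continuous_on {0..T} v'" and B: "B > 0"
    and step: "\<forall>t\<in>{0..T}. (\<forall>s\<in>{0<..<t}. 0 < v s) \<longrightarrow> v' t \<ge> B"
  shows "\<forall>t\<in>{0..T}. v' t \<ge> B"
proof -
  have v_pos: "\<forall>s\<in>{0<..<t}. 0 < v s" if "t \<le> T" "\<forall>x\<in>{0..<t}. v' x > 0" for t
    using pos_if_deriv_pos_from_0[OF v0 deriv] that by force
  have "\<forall>t\<in>{0..T}. v' t > 0"
  proof (rule ccontr)
    assume not_pos: "\<not> (\<forall>t\<in>{0..T}. v' t > 0)"
    define S where "S = {0..T} \<inter> v' -` {..0}"
    have "S \<noteq> {}" using not_pos unfolding S_def by force
    moreover have "bdd_below S" unfolding S_def by (auto intro: bdd_belowI[of _ 0])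
    moreover have "closed S" unfolding S_def by (rule continuous_closed_preimage[OF cont]) auto
    ultimately have "Inf S \<in> S" by (rule closed_contains_Inf)
    have "v' x > 0" if "x \<in> {0..<Inf S}" for x
      using cInf_lower[OF _ \<open>bdd_below S\<close>, of x] that \<open>Inf S \<in> S\<close> unfolding S_def by force
    moreover have "Inf S \<in> {0..T}" using \<open>Inf S \<in> S\<close> unfolding S_def by blast
    ultimately have "v' (Inf S) \<ge> B" using step v_pos by fastforce
    then show False using \<open>Inf S \<in> S\<close> B unfolding S_def by auto
  qed
  then show ?thesis using step v_pos by fastforce
qed

lemma ivp_solution_reaches_level:
  fixes h f v :: "real \<Rightarrow> real"
  assumes T: "T > 0" and p: "p > 1" and sol: "ivp_solution h f p a v T"
    and h: "\<forall>t\<in>{0..T}. h integrable_on {0<..<t} \<and> integral {0<..<t} h \<le> H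
              \<and> (\<forall>s\<in>{0<..<t}. 0 \<le> h s)"
    and f_le: "\<forall>u. 0 < u \<and> u < M \<longrightarrow> f u \<le> C" and C: "C \<ge> 0" and M: "M > 0"
    and a: "C * H + (M / T) powr (p - 1) \<le> a powr (p - 1)"
  shows "\<exists>t\<in>{0..T}. v t \<ge> M"
proof (rule ccontr)
  assume "\<not> ?thesis"
  then have v_lt: "\<forall>t\<in>{0..T}. v t < M" by force
  obtain v' where v0: "v 0 = 0"
    and deriv: "\<forall>t\<in>{0..T}. (v has_real_derivative v' t) (at t within {0..T})"
    and cont: "continuous_on {0..T} v'"
    and eq: "\<forall>t\<in>{0..T}. (\<lambda>s. h s * f (v s)) absolutely_integrable_on {0<..<t} \<and>
              \<bar>v' t\<bar> powr (p - 2) * v' t = a powr (p - 1) - integral {0<..<t} (\<lambda>s. h s * f (v s))"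
    using sol unfolding ivp_solution_def by blast
  have B: "M / T > 0" using M T by simp
  have "v' t \<ge> M / T" if "t \<in> {0..T}" "\<forall>s\<in>{0<..<t}. 0 < v s" for t
    using slope_ge_if_forcing_bounded[OF p B C, of "v' t" a t h f v H] eq h f_le v_lt a that
    by (auto simp: absolutely_integrable_on_def)
  then have "\<forall>t\<in>{0..T}. v' t \<ge> M / T"
    using deriv_ge_if_ge_while_positive[OF v0 deriv cont B] by blast
  moreover obtain x where "x \<in> {0<..<T}" "v T = v' x * T"
    using mvt_from_0[OF T order_refl deriv] v0 by auto
  ultimately have "v T \<ge> M" using T by (auto simp: field_simps)
  then show False using v_lt[rule_format, of T] T by simp
qed

lemma ivp_solutions_max_tendsto_infinity:
  fixes h f :: "real \<Rightarrow> real" and v :: "real \<Rightarrow> real \<Rightarrow> real"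
  assumes T: "T > 0" and p: "p > 1"
    and sol: "\<forall>a>0. ivp_solution h f p a (v a) T"
    and h: "\<forall>t\<in>{0..T}. h integrable_on {0<..<t} \<and> integral {0<..<t} h \<le> H
              \<and> (\<forall>s\<in>{0<..<t}. 0 \<le> h s)"
    and f_bdd: "\<forall>M. \<exists>C\<ge>0. \<forall>u. 0 < u \<and> u < M \<longrightarrow> f u \<le> C"
  shows "filterlim (\<lambda>a. Sup (v a ` {0..T})) at_top at_top"
  unfolding filterlim_at_top
proof
  fix Z :: real
  define M where "M = max Z 1"
  have M: "M > 0" "Z \<le> M" unfolding M_def by auto
  obtain C where C: "C \<ge> 0" and f_le: "\<forall>u. 0 < u \<and> u < M \<longrightarrow> f u \<le> C"
    using f_bdd by blast
  define X where "X = C * H + (M / T) powr (p - 1)"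
  have "Z \<le> Sup (v a ` {0..T})" if a: "a \<ge> max 1 ((max 0 X) powr (1 / (p - 1)))" for a
  proof -
    have "X \<le> ((max 0 X) powr (1 / (p - 1))) powr (p - 1)" using p by (simp add: powr_powr)
    also have "\<dots> \<le> a powr (p - 1)" using a p by (intro powr_mono2) auto
    finally have a_large: "C * H + (M / T) powr (p - 1) \<le> a powr (p - 1)" unfolding X_def .
    have sol_a: "ivp_solution h f p a (v a) T" using sol a by simp
    obtain t where t: "t \<in> {0..T}" "v a t \<ge> M"
      using ivp_solution_reaches_level[OF T p sol_a h f_le C M(1) a_large] by blast
    have "bdd_above (v a ` {0..T})"
      using ivp_solution_continuous_on[OF sol_a]
      by (intro bounded_imp_bdd_above compact_imp_bounded compact_continuous_image) auto
    then have "v a t \<le> Sup (v a ` {0..T})" using t(1) by (intro cSup_upper) auto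
    then show ?thesis using t(2) M(2) by linarith
  qed
  then show "eventually (\<lambda>a. Z \<le> Sup (v a ` {0..T})) at_top"
    unfolding eventually_at_top_linorder by blast
qed

theorem lemma2p4:
  fixes N :: nat and p l m \<beta> R \<alpha> \<alpha>1 K0 K1 :: real
    and f g1 g2 K K' :: "real \<Rightarrow> real"
    and v :: "real \<Rightarrow> real \<Rightarrow> real"
  assumes N: "N > 2" and p: "1 < p" "p < real N"
    and f_odd: "\<forall>u. u \<noteq> 0 \<longrightarrow> f (- u) = - f u"
    and f_lip: "loc_lipschitz_on (- {0}) f"
    and H1: "loc_lipschitz_on UNIV g1" "l > p - 1"
      "\<exists>U. \<forall>u. \<bar>u\<bar> \<ge> U \<longrightarrow> f u = \<bar>u\<bar> powr (l - 1) * u + g1 u"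
      "((\<lambda>u. \<bar>g1 u\<bar> / \<bar>u\<bar> powr l) \<longlongrightarrow> 0) at_top"
    and H2: "loc_lipschitz_on UNIV g2" "g2 0 = 0" "0 < m" "m < 1"
      "\<exists>\<delta>>0. \<forall>u. u \<noteq> 0 \<and> \<bar>u\<bar> < \<delta> \<longrightarrow> f u = - (1 / (\<bar>u\<bar> powr (m - 1) * u)) + g2 u"
    and H3: "\<beta> > 0" "f \<beta> = 0" "\<forall>u>0. f u = 0 \<longrightarrow> u = \<beta>"
      "\<forall>u. 0 < u \<and> u < \<beta> \<longrightarrow> f u < 0" "\<forall>u>\<beta>. f u > 0"
    and H4: "R > 0" "\<forall>r\<ge>R. K r > 0"
      "\<forall>r\<ge>R. (K has_real_derivative K' r) (at r within {R..})"
      "continuous_on {R..} K'"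
      "\<forall>r\<ge>R. r * K' r / K r > - ((real N - 1) * p / (p - 1))"
      "K0 > 0" "K1 > 0"
      "\<forall>r\<ge>R. K0 / r powr \<alpha> \<le> K r \<and> K r \<le> K1 / r powr \<alpha>1"
      "real N + m * (real N - p) / (p - 1) < \<alpha>1" "\<alpha>1 \<le> \<alpha>" "\<alpha> < 2 * (real N - 1)"
    and sol: "\<forall>a>0. ivp_solution (hfun N p K) f p a (v a) (R powr ((p - real N) / (p - 1)))"
  shows "filterlim (\<lambda>a. Sup (v a ` {0..R powr ((p - real N) / (p - 1))})) at_top at_top"
proof -
  have "m * (real N - p) / (p - 1) > 0" using H2(3) p by simp
  then have "\<alpha>1 > real N" using H4(9) by linarith
  then obtain H where h: "\<forall>t\<in>{0..R powr ((p - real N) / (p - 1))}.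
      hfun N p K integrable_on {0<..<t} \<and> integral {0<..<t} (hfun N p K) \<le> H
      \<and> (\<forall>s\<in>{0<..<t}. 0 \<le> hfun N p K s)"
    using hfun_integral_bounded[OF p H4(1) H4(7) H4(2) H4(3)] H4(8) by blast
  have "continuous_on {\<beta>..M} f" for M
    using isCont_if_loc_lipschitz_on_open[OF f_lip open_Compl[OF closed_singleton]] H3(1)
    by (intro continuous_at_imp_continuous_on) auto
  then have "\<forall>M. \<exists>C\<ge>0. \<forall>u. 0 < u \<and> u < M \<longrightarrow> f u \<le> C"
    using bounded_above_if_negative_below H3(4) by blast
  moreover have "R powr ((p - real N) / (p - 1)) > 0" using H4(1) by simp
  ultimately show ?thesis
    using ivp_solutions_max_tendsto_infinity[OF _ p(1) sol h] by blast
qed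

end
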